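(* For every $\alpha\in[0,2]$, \[ \max_{\mathbf z\in\mathcal Z} G_\alpha(\mathbf z)\;=\;\max_{\mathbf x\in\mathcal X}G_\alpha(\mathbf x), \] i.e. the integrality gap $f^{\mathrm{SU}}(\mathbf z^* )/f^{\mathrm{RSU}}(\mathbf x^* )$ between the SSA problem with uniform allocation and its relaxation equals $1$, where $G_\alpha$ is defined below.
   Context: $\mathcal U$ (users) and $\mathcal B$ (stations) are finite nonempty sets with positive rates $r_{ub}$. $\mathcal Z=\{\mathbf z\in\mathbb Z_+^{|\mathcal U|\times|\mathcal B|}:\sum_b z_{ub}=1\ \forall u\}$ and $\mathcal X=\{\mathbf x\in\mathbb R_+^{|\mathcal U|\times|\mathcal B|}:\sum_b x_{ub}=1\ \forall u\}$. For $\mathbf w\in\mathcal X$ define $G_0(\mathbf w)=\sum_{u,b} r_{ub}w_{ub}\big(1+\sum_{v\ne u}w_{vb}\big)^{-1}$; $G_1(\mathbf w)=\sum_{u,b} w_{ub}\big(\log r_{ub}-\log(1+\sum_{v\ne u} w_{vb})\big)$; for $\alpha>0,\alpha\ne1$: $G_\alpha(\mathbf w)=\frac{1}{1-\alpha}\sum_{u,b} r_{ub}^{1-\alpha}w_{ub}\big(1+\sum_{v\ne u}w_{vb}\big)^{\alpha-1}$. $f^{\mathrm{SU}}=\max_{\mathbf z\in\mathcal Z}G_\alpha(\mathbf z)$ is the single-station association problem in which each station shares its resource uniformly among its associated users and the objective is the sum of $\alpha$-fair utilities ($U_\alpha(R)=R^{1-\alpha}/(1-\alpha)$, $U_1=\log$)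 of user rates; $f^{\mathrm{RSU}}=\max_{\mathbf x\in\mathcal X}G_\alpha(\mathbf x)$ is its relaxation; $\mathbf z^*,\mathbf x^*$ denote their optimizers. *)

theory Defs
  imports "HOL-Analysis.Analysis"
begin

text \<open>Association matrices are functions on users and stations, required to vanish
outside U x B (so that the integral feasible set is a finite set).\<close>

definition Zset :: "'u set \<Rightarrow> 'b set \<Rightarrow> ('u \<Rightarrow> 'b \<Rightarrow> real) set" where
  "Zset U B = {z. (\<forall>u b. (u \<notin> U \<or> b \<notin> B) \<longrightarrow> z u b = 0)
              \<and> (\<forall>u\<in>U. \<forall>b\<in>B. z u b \<in> \<int> \<and> z u b \<ge> 0)
              \<and> (\<forall>u\<in>U. (\<Sum>b\<in>B. z u b) = 1)}"

definition Xset :: "'u set \<Rightarrow> 'b set \<Rightarrow> ('u \<Rightarrow> 'b \<Rightarrow> real) set" where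
  "Xset U B = {x. (\<forall>u b. (u \<notin> U \<or> b \<notin> B) \<longrightarrow> x u b = 0)
              \<and> (\<forall>u\<in>U. \<forall>b\<in>B. x u b \<ge> 0)
              \<and> (\<forall>u\<in>U. (\<Sum>b\<in>B. x u b) = 1)}"

definition load :: "'u set \<Rightarrow> ('u \<Rightarrow> 'b \<Rightarrow> real) \<Rightarrow> 'u \<Rightarrow> 'b \<Rightarrow> real" where
  "load U w u b = 1 + (\<Sum>v\<in>U - {u}. w v b)"

definition G :: "real \<Rightarrow> ('u \<Rightarrow> 'b \<Rightarrow> real) \<Rightarrow> 'u set \<Rightarrow> 'b set
                 \<Rightarrow> ('u \<Rightarrow> 'b \<Rightarrow> real) \<Rightarrow> real" where
  "G \<alpha> r U B w =
     (if \<alpha> = 0 then (\<Sum>u\<in>U. \<Sum>b\<in>B. r u b * w u b / load U w u b)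
      else if \<alpha> = 1 then (\<Sum>u\<in>U. \<Sum>b\<in>B. w u b * (ln (r u b) - ln (load U w u b)))
      else (1 / (1 - \<alpha>)) * (\<Sum>u\<in>U. \<Sum>b\<in>B.
              r u b powr (1 - \<alpha>) * w u b * load U w u b powr (\<alpha> - 1)))"

end

theory Submission
  imports Defs
begin

text \<open>The objective is \<open>\<Sum> w\<^sub>u\<^sub>b \<psi>\<^sub>u\<^sub>b(load)\<close> with \<open>\<psi>\<^sub>u\<^sub>b(L) = U\<^sub>\<alpha>(r\<^sub>u\<^sub>b / L)\<close>, which is
  convex in \<open>L\<close> exactly when \<open>\<alpha> \<le> 2\<close>. Fix a fractional
  association and a user \<open>u\<close>, and send \<open>u\<close> entirely to station \<open>b\<close> with probability \<open>x\<^sub>u\<^sub>b\<close>.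
  The terms of \<open>u\<close> itself keep their expectation (its own load does not involve its own row),
  and every other term is a convex function of a load that is affine in \<open>u\<close>'s row, so by
  Jensen the expected objective does not decrease. Some station for \<open>u\<close> is therefore at least
  as good as the fractional row; rounding the users one at a time yields an integral
  association that is at least as good as any fractional one.\<close>

lemma convex_on_cmult_powr:
  assumes "0 \<le> c * (p * (p - 1))"
  shows "convex_on {0<..} (\<lambda>L::real. c * L powr p)"
proof (rule f''_ge0_imp_convex)
  show "((\<lambda>L. c * L powr p) has_real_derivative c * (p * L powr (p - 1))) (at L)"
    if "L \<in> {0<..}" for L
    using DERIV_cmult[OF has_real_derivative_powr[of L p], of c] that by simp
  show "((\<lambda>L. c * (p * L powr (p - 1))) has_real_derivative c * (p * ((p - 1) * L powr (p - 2)))) (at L)"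
    if "L \<in> {0<..}" for L
    using DERIV_cmult[OF DERIV_cmult[OF has_real_derivative_powr[of L "p - 1"], of p], of c] that
    by (simp add: mult.assoc)
  show "0 \<le> c * (p * ((p - 1) * L powr (p - 2)))" for L
    using assms by (simp add: mult.assoc[symmetric])
qed simp

lemma convex_on_const_div: "0 \<le> r \<Longrightarrow> convex_on {0<..} (\<lambda>L::real. r / L)"
  by (intro f''_ge0_imp_convex[where f' = "\<lambda>L. - r / L^2" and f'' = "\<lambda>L. 2 * r / L^3"])
     (auto intro!: derivative_eq_intros simp: field_simps power2_eq_square power3_eq_cube)

lemma convex_on_const_minus_ln: "convex_on {0<..} (\<lambda>L. c - ln L)"
proof -
  have "convex_on {0<..} (\<lambda>L. c + - ln L)"
    using ln_concave unfolding concave_on_def by (intro convex_on_add) (auto simp: convex_on_const)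
  then show ?thesis by simp
qed

text \<open>\<open>U\<^sub>\<alpha>(r / L)\<close>: the utility of peak rate \<open>r\<close> shared uniformly at load \<open>L\<close>.\<close>
definition fair_utility :: "real \<Rightarrow> real \<Rightarrow> real \<Rightarrow> real" where
  "fair_utility \<alpha> r L = (if \<alpha> = 0 then r / L else if \<alpha> = 1 then ln r - ln L
      else (1 / (1 - \<alpha>)) * r powr (1 - \<alpha>) * L powr (\<alpha> - 1))"

lemma convex_on_fair_utility:
  assumes "\<alpha> \<le> 2" "0 < r"
  shows "convex_on {0<..} (fair_utility \<alpha> r)"
proof -
  consider "\<alpha> = 0" | "\<alpha> = 1" | "\<alpha> \<noteq> 0" "\<alpha> \<noteq> 1" by blast
  then show ?thesis
  proof cases
    case 1
    then have "fair_utility \<alpha> r = (\<lambda>L. r / L)" by (simp add: fun_eq_iff fair_utility_def)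
    then show ?thesis using assms by (simp add: convex_on_const_div)
  next
    case 2
    then have "fair_utility \<alpha> r = (\<lambda>L. ln r - ln L)" by (simp add: fun_eq_iff fair_utility_def)
    then show ?thesis by (simp add: convex_on_const_minus_ln)
  next
    case 3
    define c where "c = (1 / (1 - \<alpha>)) * r powr (1 - \<alpha>)"
    have "c * ((\<alpha> - 1) * ((\<alpha> - 1) - 1)) = r powr (1 - \<alpha>) * (2 - \<alpha>)"
      using 3 by (simp add: c_def field_simps)
    then have "convex_on {0<..} (\<lambda>L. c * L powr (\<alpha> - 1))"
      using assms by (intro convex_on_cmult_powr) simp
    moreover have "fair_utility \<alpha> r = (\<lambda>L. c * L powr (\<alpha> - 1))"
      using 3 by (simp add: fun_eq_iff fair_utility_def c_def)
    ultimately show ?thesis by simp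
  qed
qed

lemma convex_on_unit_step:
  assumes "convex_on {0<..} f" "0 < A" "0 \<le> t" "t \<le> 1"
  shows "f (A + t) \<le> (1 - t) * f A + t * f (A + 1)"
proof -
  have "(1 - t) *\<^sub>R A + t *\<^sub>R (A + 1) = A + t" by (simp add: algebra_simps)
  then show ?thesis using convex_onD[OF assms(1), of t A "A + 1"] assms by simp
qed

definition load_objective :: "('u \<Rightarrow> 'b \<Rightarrow> real \<Rightarrow> real) \<Rightarrow> 'u set \<Rightarrow> 'b set
                              \<Rightarrow> ('u \<Rightarrow> 'b \<Rightarrow> real) \<Rightarrow> real" where
  "load_objective \<Psi> U B w = (\<Sum>v\<in>U. \<Sum>c\<in>B. w v c * \<Psi> v c (load U w v c))"

lemma G_eq_load_objective: "G \<alpha> r U B w = load_objective (\<lambda>v c. fair_utility \<alpha> (r v c)) U B w"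
  unfolding G_def load_objective_def fair_utility_def
  by (auto simp: sum_distrib_left mult_ac intro!: sum.cong)

definition reassign :: "('u \<Rightarrow> 'b \<Rightarrow> real) \<Rightarrow> 'u \<Rightarrow> 'b \<Rightarrow> 'u \<Rightarrow> 'b \<Rightarrow> real" where
  "reassign x u b = (\<lambda>v c. if v = u then (if c = b then 1 else 0) else x v c)"

lemma reassign_in_Xset:
  assumes "x \<in> Xset U B" "u \<in> U" "b \<in> B" "finite B"
  shows "reassign x u b \<in> Xset U B"
proof -
  have "(\<Sum>c\<in>B. reassign x u b v c) = 1" if "v \<in> U" for v
    using assms that unfolding Xset_def reassign_def by (cases "v = u") (simp_all add: sum.delta)
  then show ?thesis using assms unfolding Xset_def reassign_def by auto
qed

lemma load_reassign_self: "load U (reassign x u b) u c = load U x u c"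
  unfolding load_def reassign_def by (intro arg_cong[where f = "\<lambda>s. 1 + s"] sum.cong) auto

lemma load_remove:
  assumes "finite U" "u \<in> U" "u \<noteq> v"
  shows "load U w v c = 1 + (\<Sum>v'\<in>U - {v} - {u}. w v' c) + w u c"
  using sum.remove[of "U - {v}" u "\<lambda>v'. w v' c"] assms unfolding load_def by auto

lemma sum_mult_if_eq:
  fixes y :: "'b \<Rightarrow> real"
  assumes "finite B" "c \<in> B"
  shows "(\<Sum>b\<in>B. y b * (if c = b then P else Q)) = y c * P + (sum y B - y c) * Q"
proof -
  have "(\<Sum>b\<in>B. y b * (if c = b then P else Q)) = (\<Sum>b\<in>B. y b * Q + (if c = b then y b * (P - Q) else 0))"
    by (intro sum.cong) (auto simp: right_diff_distrib)
  also have "\<dots> = sum y B * Q + y c * (P - Q)"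
    using assms by (simp add: sum.distrib sum_distrib_right sum.delta)
  finally show ?thesis by (simp add: algebra_simps)
qed

lemma load_objective_term_le_reassign:
  assumes "finite U" "finite B"
    and convex: "convex_on {0<..} (\<Psi> v c)"
    and x: "x \<in> Xset U B" and u: "u \<in> U" and v: "v \<in> U" and c: "c \<in> B"
  shows "x v c * \<Psi> v c (load U x v c)
           \<le> (\<Sum>b\<in>B. x u b * (reassign x u b v c * \<Psi> v c (load U (reassign x u b) v c)))"
proof (cases "v = u")
  case True
  have "(\<Sum>b\<in>B. x u b * (reassign x u b v c * \<Psi> v c (load U (reassign x u b) v c)))
      = (\<Sum>b\<in>B. if c = b then x u b * \<Psi> v c (load U x v c) else 0)"
    unfolding True load_reassign_self by (intro sum.cong) (auto simp: reassign_def)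
  then show ?thesis using True c assms(2) by (simp add: sum.delta)
next
  case False
  have x_nonneg: "\<And>v c. v \<in> U \<Longrightarrow> c \<in> B \<Longrightarrow> 0 \<le> x v c"
    and x_row: "(\<Sum>c\<in>B. x u c) = 1"
    using x u unfolding Xset_def by auto
  have "x u c \<le> (\<Sum>c\<in>B. x u c)"
    using assms(2) c u x_nonneg by (intro member_le_sum) auto
  then have xuc: "0 \<le> x u c" "x u c \<le> 1" using x_row x_nonneg[OF u c] by auto
  define A where "A = 1 + (\<Sum>v'\<in>U - {v} - {u}. x v' c)"
  have "0 \<le> (\<Sum>v'\<in>U - {v} - {u}. x v' c)" using x_nonneg c by (intro sum_nonneg) auto
  then have "0 < A" unfolding A_def by simp
  have load_x: "load U x v c = A + x u c"
    unfolding A_def using load_remove[OF assms(1) u, of v] False by simp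
  have load_reassign: "load U (reassign x u b) v c = A + (if c = b then 1 else 0)" for b
  proof -
    have "(\<Sum>v'\<in>U - {v} - {u}. reassign x u b v' c) = (\<Sum>v'\<in>U - {v} - {u}. x v' c)"
      by (intro sum.cong) (auto simp: reassign_def)
    then show ?thesis
      using load_remove[OF assms(1) u, of v "reassign x u b" c] False
      unfolding A_def by (simp add: reassign_def)
  qed
  have "x v c * \<Psi> v c (A + x u c) \<le> x v c * (x u c * \<Psi> v c (A + 1) + (1 - x u c) * \<Psi> v c A)"
    using convex_on_unit_step[OF convex \<open>0 < A\<close> xuc] x_nonneg[OF v c]
    by (intro mult_left_mono) auto
  also have "\<dots> = x v c * (\<Sum>b\<in>B. x u b * (if c = b then \<Psi> v c (A + 1) else \<Psi> v c A))"
    using sum_mult_if_eq[OF assms(2) c, of "x u"] x_row by simp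
  also have "\<dots> = (\<Sum>b\<in>B. x u b * (reassign x u b v c * \<Psi> v c (load U (reassign x u b) v c)))"
    unfolding sum_distrib_left load_reassign by (intro sum.cong) (auto simp: reassign_def False)
  finally show ?thesis using load_x by simp
qed

lemma load_objective_le_reassign_average:
  assumes "finite U" "finite B"
    and "\<And>v c. v \<in> U \<Longrightarrow> c \<in> B \<Longrightarrow> convex_on {0<..} (\<Psi> v c)"
    and "x \<in> Xset U B" "u \<in> U"
  shows "load_objective \<Psi> U B x \<le> (\<Sum>b\<in>B. x u b * load_objective \<Psi> U B (reassign x u b))"
proof -
  have "load_objective \<Psi> U B x
      \<le> (\<Sum>v\<in>U. \<Sum>c\<in>B. \<Sum>b\<in>B. x u b * (reassign x u b v c * \<Psi> v c (load U (reassign x u b) v c)))"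
    unfolding load_objective_def
    by (intro sum_mono load_objective_term_le_reassign[OF assms(1,2) assms(3) assms(4,5)])
  also have "\<dots> = (\<Sum>b\<in>B. \<Sum>v\<in>U. \<Sum>c\<in>B. x u b * (reassign x u b v c * \<Psi> v c (load U (reassign x u b) v c)))"
    by (subst sum.swap[of _ B B], rule sum.swap)
  also have "\<dots> = (\<Sum>b\<in>B. x u b * load_objective \<Psi> U B (reassign x u b))"
    unfolding load_objective_def by (simp add: sum_distrib_left)
  finally show ?thesis .
qed

lemma exists_reassign_load_objective_ge:
  assumes "finite U" "finite B" "B \<noteq> {}"
    and convex: "\<And>v c. v \<in> U \<Longrightarrow> c \<in> B \<Longrightarrow> convex_on {0<..} (\<Psi> v c)"
    and x: "x \<in> Xset U B" and u: "u \<in> U"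
  shows "\<exists>b\<in>B. load_objective \<Psi> U B x \<le> load_objective \<Psi> U B (reassign x u b)"
proof -
  define g where "g b = load_objective \<Psi> U B (reassign x u b)" for b
  have "Max (g ` B) \<in> g ` B" using assms(2,3) by simp
  then obtain b where b: "b \<in> B" and "g b = Max (g ` B)" by auto
  then have g_max: "g b' \<le> g b" if "b' \<in> B" for b'
    using that assms(2) by simp
  have "(\<Sum>c\<in>B. x u c) = 1" "\<And>c. c \<in> B \<Longrightarrow> 0 \<le> x u c"
    using x u unfolding Xset_def by auto
  then have "(\<Sum>b'\<in>B. x u b' * g b') \<le> g b"
    using sum_mono[of B "\<lambda>b'. x u b' * g b'" "\<lambda>b'. x u b' * g b"] g_max
    by (simp add: mult_left_mono flip: sum_distrib_right)
  then have "load_objective \<Psi> U B x \<le> g b"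
    using load_objective_le_reassign_average[where \<Psi> = \<Psi>, OF assms(1,2) convex x u]
    unfolding g_def by linarith
  then show ?thesis using b unfolding g_def by blast
qed

lemma exists_Zset_load_objective_ge:
  assumes "finite U" "finite B" "B \<noteq> {}"
    and convex: "\<And>v c. v \<in> U \<Longrightarrow> c \<in> B \<Longrightarrow> convex_on {0<..} (\<Psi> v c)"
    and "x \<in> Xset U B"
  shows "\<exists>z\<in>Zset U B. load_objective \<Psi> U B x \<le> load_objective \<Psi> U B z"
proof -
  have "\<exists>z\<in>Zset U B. load_objective \<Psi> U B x \<le> load_objective \<Psi> U B z"
    if "finite S" "x \<in> Xset U B" "\<forall>v\<in>U - S. \<forall>c\<in>B. x v c \<in> \<int>" for S x
    using that
  proof (induction S arbitrary: x rule: finite_induct)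
    case empty
    then have "x \<in> Zset U B" unfolding Xset_def Zset_def by auto
    then show ?case by blast
  next
    case (insert u S)
    show ?case
    proof (cases "u \<in> U")
      case False
      then have "U - S = U - insert u S" by auto
      then show ?thesis using insert by auto
    next
      case True
      obtain b where b: "b \<in> B"
        and "load_objective \<Psi> U B x \<le> load_objective \<Psi> U B (reassign x u b)"
        using exists_reassign_load_objective_ge[where \<Psi> = \<Psi>, OF assms(1-3) convex insert.prems(1) True]
        by blast
      moreover have "reassign x u b \<in> Xset U B"
        using reassign_in_Xset[OF insert.prems(1) True b assms(2)] .
      moreover have "\<forall>v\<in>U - S. \<forall>c\<in>B. reassign x u b v c \<in> \<int>"
        using insert.prems(2) by (auto simp: reassign_def)
      ultimately show ?thesis using insert.IH by (meson order_trans)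
    qed
  qed
  then show ?thesis using assms(1,5) by blast
qed

lemma Zset_subset_Xset: "Zset U B \<subseteq> Xset U B"
  unfolding Zset_def Xset_def by auto

lemma Zset_not_empty:
  assumes "finite B" "B \<noteq> {}"
  shows "Zset U B \<noteq> {}"
proof -
  obtain b where "b \<in> B" using assms(2) by blast
  then have "(\<lambda>u c. if u \<in> U \<and> c = b then 1 else 0) \<in> Zset U B"
    unfolding Zset_def using assms(1) by (auto simp: sum.delta' cong: conj_cong)
  then show ?thesis by blast
qed

lemma Zset_zero_one:
  assumes "z \<in> Zset U B" "finite B" "u \<in> U" "b \<in> B"
  shows "z u b = 0 \<or> z u b = 1"
proof -
  have "z u b \<in> \<int>" "0 \<le> z u b" using assms unfolding Zset_def by auto
  have "z u b \<le> (\<Sum>c\<in>B. z u c)"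
    using assms unfolding Zset_def by (intro member_le_sum) auto
  then have "z u b \<le> 1" using assms unfolding Zset_def by auto
  obtain n where n: "z u b = of_int n" using \<open>z u b \<in> \<int>\<close> by (auto elim: Ints_cases)
  then have "0 \<le> n" "n \<le> 1" using \<open>0 \<le> z u b\<close> \<open>z u b \<le> 1\<close> by simp_all
  then show ?thesis using n by (cases "n = 0") auto
qed

text \<open>An integral association is the indicator of the set of its user--station links.\<close>
lemma finite_Zset:
  assumes "finite U" "finite B"
  shows "finite (Zset U B)"
proof -
  let ?indicator = "\<lambda>S u b. if (u, b) \<in> S then 1 else (0::real)"
  have "z = ?indicator {(u, b) \<in> U \<times> B. z u b = 1}" if z: "z \<in> Zset U B" for z
  proof (intro ext)
    fix u b
    show "z u b = ?indicator {(u, b) \<in> U \<times> B. z u b = 1} u b"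
    proof (cases "u \<in> U \<and> b \<in> B")
      case True
      then show ?thesis using Zset_zero_one[OF z assms(2)] by auto
    next
      case False
      then show ?thesis using z unfolding Zset_def by auto
    qed
  qed
  then have "Zset U B \<subseteq> ?indicator ` Pow (U \<times> B)" by blast
  then show ?thesis using assms by (meson finite_Pow_iff finite_SigmaI finite_surj)
qed

lemma Max_eq_Sup_if_dominating:
  fixes f :: "'a \<Rightarrow> real"
  assumes "finite A" "A \<noteq> {}" "A \<subseteq> X" "\<And>x. x \<in> X \<Longrightarrow> \<exists>a\<in>A. f x \<le> f a"
  shows "(MAX a\<in>A. f a) = (SUP x\<in>X. f x)"
proof (rule cSup_eq_maximum[symmetric])
  have "(MAX a\<in>A. f a) \<in> f ` A" using assms(1,2) by simp
  then show "(MAX a\<in>A. f a) \<in> f ` X" using assms(3) by blast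
  show "y \<le> (MAX a\<in>A. f a)" if y: "y \<in> f ` X" for y
  proof -
    obtain x where "x \<in> X" "y = f x" using y by blast
    moreover obtain a where "a \<in> A" "f x \<le> f a" using assms(4) \<open>x \<in> X\<close> by blast
    moreover have "f a \<le> (MAX a\<in>A. f a)" using \<open>a \<in> A\<close> assms(1) by simp
    ultimately show ?thesis by linarith
  qed
qed

theorem theorem2:
  fixes U :: "'u set" and B :: "'b set" and r :: "'u \<Rightarrow> 'b \<Rightarrow> real" and \<alpha> :: real
  assumes "finite U" "U \<noteq> {}" "finite B" "B \<noteq> {}"
    and "\<forall>u\<in>U. \<forall>b\<in>B. r u b > 0"
    and "0 \<le> \<alpha>" "\<alpha> \<le> 2"
  shows "(MAX z\<in>Zset U B. G \<alpha> r U B z) = (SUP x\<in>Xset U B. G \<alpha> r U B x)"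
proof (rule Max_eq_Sup_if_dominating)
  show "finite (Zset U B)" using finite_Zset assms(1,3) .
  show "Zset U B \<noteq> {}" using Zset_not_empty assms(3,4) .
  show "Zset U B \<subseteq> Xset U B" by (rule Zset_subset_Xset)
  have convex: "convex_on {0<..} (fair_utility \<alpha> (r v c))" if "v \<in> U" "c \<in> B" for v c
    using convex_on_fair_utility[OF assms(7)] assms(5) that by simp
  show "\<exists>z\<in>Zset U B. G \<alpha> r U B x \<le> G \<alpha> r U B z" if "x \<in> Xset U B" for x
    unfolding G_eq_load_objective
    using exists_Zset_load_objective_ge[where \<Psi> = "\<lambda>v c. fair_utility \<alpha> (r v c)",
        OF assms(1,3,4) convex that] .
qed

end
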